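(* Let $G$ be a strong $(\ell,d)$-graph. Then for any two strong $(\ell,d)$-partitions $\pi$ and $\pi'$ of $G$, the graphs $\phi(G,\pi)$ and $\phi(G,\pi')$ are identical.
   Context: For $U,W\subseteq V(G)$, $\Delta(U,W)=\max\{|N(u)\cap W|,|N(x)\cap U|:u\in U,x\in W\}$, and $\overline\Delta(U,W)$ likewise with $\overline N(v)=V(G)\setminus(N(v)\cup\{v\})$. A partition $\pi=\{V_1,\dots,V_{\ell'}\}$ of $V(G)$ is an $(\ell,d)$-partition if $\ell'\le\ell$ and every pair $(V_i,V_j)$ (not necessarily distinct) is $d$-sparse ($\Delta(V_i,V_j)\le d$) or $d$-dense ($\overline\Delta(V_i,V_j)\le d$); strong if each bag has at least $5\cdot2^\ell d$ vertices. The density graph $H(G,\pi)$ has vertex set $\{1,\dots,\ell'\}$, with edge $ij$ (a loop if $i=j$) iff $(V_i,V_j)$ is $d$-dense. For a graph $H'$ with loops on $\{1,\dots,\ell'\}$, $\psi(G,\pi,H')$ is obtained from $G$ by replacing, for each edge $ij$ of $H'$ with $i\ne j$, the bipartite graph between $V_i$ and $V_j$ by its bipartite complement, and, for each loop at $i$, $G[V_i]$ by its complement. Finally $\phi(G,\pi)=\psi(G,\pi,H(G,\pi))$. *)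

theory Defs
  imports "HOL-Library.Disjoint_Sets"
begin

definition simple_graph :: "'a set \<Rightarrow> 'a set set \<Rightarrow> bool" where
  "simple_graph V E \<longleftrightarrow> finite V \<and>
     (\<forall>e\<in>E. \<exists>u v. e = {u, v} \<and> u \<noteq> v \<and> u \<in> V \<and> v \<in> V)"

definition nbhd :: "'a set \<Rightarrow> 'a set set \<Rightarrow> 'a \<Rightarrow> 'a set" where
  "nbhd V E v = {u \<in> V. {u, v} \<in> E}"

definition nonnbhd :: "'a set \<Rightarrow> 'a set set \<Rightarrow> 'a \<Rightarrow> 'a set" where
  "nonnbhd V E v = V - (nbhd V E v \<union> {v})"

definition Delta :: "'a set \<Rightarrow> 'a set set \<Rightarrow> 'a set \<Rightarrow> 'a set \<Rightarrow> nat" where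
  "Delta V E U W = Max ({card (nbhd V E u \<inter> W) | u. u \<in> U} \<union>
                        {card (nbhd V E x \<inter> U) | x. x \<in> W})"

definition coDelta :: "'a set \<Rightarrow> 'a set set \<Rightarrow> 'a set \<Rightarrow> 'a set \<Rightarrow> nat" where
  "coDelta V E U W = Max ({card (nonnbhd V E u \<inter> W) | u. u \<in> U} \<union>
                          {card (nonnbhd V E x \<inter> U) | x. x \<in> W})"

definition d_sparse :: "'a set \<Rightarrow> 'a set set \<Rightarrow> nat \<Rightarrow> 'a set \<Rightarrow> 'a set \<Rightarrow> bool" where
  "d_sparse V E d U W \<longleftrightarrow> Delta V E U W \<le> d"

definition d_dense :: "'a set \<Rightarrow> 'a set set \<Rightarrow> nat \<Rightarrow> 'a set \<Rightarrow> 'a set \<Rightarrow> bool" where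
  "d_dense V E d U W \<longleftrightarrow> coDelta V E U W \<le> d"

definition ld_partition :: "'a set \<Rightarrow> 'a set set \<Rightarrow> nat \<Rightarrow> nat \<Rightarrow> 'a set set \<Rightarrow> bool" where
  "ld_partition V E l d P \<longleftrightarrow> partition_on V P \<and> card P \<le> l \<and>
     (\<forall>X\<in>P. \<forall>Y\<in>P. d_sparse V E d X Y \<or> d_dense V E d X Y)"

definition strong_ld_partition :: "'a set \<Rightarrow> 'a set set \<Rightarrow> nat \<Rightarrow> nat \<Rightarrow> 'a set set \<Rightarrow> bool" where
  "strong_ld_partition V E l d P \<longleftrightarrow> ld_partition V E l d P \<and>
     (\<forall>X\<in>P. card X \<ge> 5 * 2 ^ l * d)"

definition strong_ld_graph :: "'a set \<Rightarrow> 'a set set \<Rightarrow> nat \<Rightarrow> nat \<Rightarrow> bool" where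
  "strong_ld_graph V E l d \<longleftrightarrow> simple_graph V E \<and> (\<exists>P. strong_ld_partition V E l d P)"

text \<open>Edge set of psi(G,P,H'), where H' is given as a symmetric relation on bags
  (a loop at X being H' X X).  Vertex set stays V.\<close>
definition psi_edges :: "'a set \<Rightarrow> 'a set set \<Rightarrow> 'a set set \<Rightarrow> ('a set \<Rightarrow> 'a set \<Rightarrow> bool) \<Rightarrow> 'a set set" where
  "psi_edges V E P H' = {{u, v} | u v X Y. X \<in> P \<and> Y \<in> P \<and> u \<in> X \<and> v \<in> Y \<and> u \<noteq> v \<and>
                          ({u, v} \<in> E \<longleftrightarrow> \<not> H' X Y)}"

definition density_graph :: "'a set \<Rightarrow> 'a set set \<Rightarrow> nat \<Rightarrow> 'a set \<Rightarrow> 'a set \<Rightarrow> bool" where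
  "density_graph V E d X Y \<longleftrightarrow> d_dense V E d X Y"

definition phi_edges :: "'a set \<Rightarrow> 'a set set \<Rightarrow> nat \<Rightarrow> 'a set set \<Rightarrow> 'a set set" where
  "phi_edges V E d P = psi_edges V E P (density_graph V E d)"

end

theory Submission
  imports Defs
begin

text \<open>A vertex u splits any set C \<subseteq> V - {u} into neighbours and non-neighbours, so it
  cannot have at most d of each in C once |C| > 2d.  Hence if u lies in X \<in> P and X' \<in> P',
  and bags Y \<in> P, Y' \<in> P' share more than 2d vertices other than u, then (X, Y) is dense
  iff (X', Y') is.  For d = 0 the single common vertex v of Y and Y' suffices.  For d \<ge> 1
  a bag has 5 \<cdot> 2^l d > l(2d+2) vertices, so by pigeonhole it shares more than 2d+1
  vertices with some bag of the other partition, and the bag pair of u, v can be moved from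
  P to P' one bag at a time.  So both partitions complement exactly the same vertex pairs.\<close>

lemma card_nbhd_le_if_sparse:
  assumes "d_sparse V E d X Y" "finite X" "finite Y" "u \<in> X"
  shows "card (nbhd V E u \<inter> Y) \<le> d"
proof -
  have "card (nbhd V E u \<inter> Y) \<le> Delta V E X Y"
    unfolding Delta_def by (rule Max_ge) (use assms in auto)
  with assms(1) show ?thesis unfolding d_sparse_def by simp
qed

lemma card_nonnbhd_le_if_dense:
  assumes "d_dense V E d X Y" "finite X" "finite Y" "u \<in> X"
  shows "card (nonnbhd V E u \<inter> Y) \<le> d"
proof -
  have "card (nonnbhd V E u \<inter> Y) \<le> coDelta V E X Y"
    unfolding coDelta_def by (rule Max_ge) (use assms in auto)
  with assms(1) show ?thesis unfolding d_dense_def by simp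
qed

lemma d_dense_commute: "d_dense V E d X Y \<longleftrightarrow> d_dense V E d Y X"
  unfolding d_dense_def coDelta_def by (simp add: Un_commute)

lemma card_le_nbhd_plus_nonnbhd:
  assumes "finite V" "C \<subseteq> V - {u}"
  shows "card C \<le> card (nbhd V E u \<inter> C) + card (nonnbhd V E u \<inter> C)"
proof -
  have "C = (nbhd V E u \<inter> C) \<union> (nonnbhd V E u \<inter> C)"
    using assms(2) unfolding nbhd_def nonnbhd_def by auto
  then have "card C = card ((nbhd V E u \<inter> C) \<union> (nonnbhd V E u \<inter> C))" by simp
  also have "\<dots> \<le> card (nbhd V E u \<inter> C) + card (nonnbhd V E u \<inter> C)"
    by (rule card_Un_le)
  finally show ?thesis .
qed

lemma not_dense_and_sparse_at_common_vertex:
  assumes "finite V" "X \<subseteq> V" "Y \<subseteq> V" "X' \<subseteq> V" "Y' \<subseteq> V"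
    and "u \<in> X" "u \<in> X'" and "2 * d < card (Y \<inter> Y' - {u})"
    and "d_dense V E d X Y" "d_sparse V E d X' Y'"
  shows False
proof -
  let ?C = "Y \<inter> Y' - {u}"
  have fin: "finite X" "finite Y" "finite X'" "finite Y'"
    using assms(1-5) rev_finite_subset by blast+
  have "card (nonnbhd V E u \<inter> ?C) \<le> card (nonnbhd V E u \<inter> Y)"
    using fin by (intro card_mono) auto
  also have "\<dots> \<le> d"
    using card_nonnbhd_le_if_dense[OF assms(9) fin(1,2) assms(6)] .
  finally have non: "card (nonnbhd V E u \<inter> ?C) \<le> d" .
  have "card (nbhd V E u \<inter> ?C) \<le> card (nbhd V E u \<inter> Y')"
    using fin by (intro card_mono) auto
  also have "\<dots> \<le> d"
    using card_nbhd_le_if_sparse[OF assms(10) fin(3,4) assms(7)] .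
  finally have nb: "card (nbhd V E u \<inter> ?C) \<le> d" .
  have "card ?C \<le> card (nbhd V E u \<inter> ?C) + card (nonnbhd V E u \<inter> ?C)"
    using assms(1,3) by (intro card_le_nbhd_plus_nonnbhd) auto
  with non nb assms(8) show False by linarith
qed

lemma d_dense_transfer:
  assumes "finite V" "X \<subseteq> V" "Y \<subseteq> V" "X' \<subseteq> V" "Y' \<subseteq> V"
    and "u \<in> X" "u \<in> X'" and "2 * d < card (Y \<inter> Y' - {u})"
    and "d_sparse V E d X Y \<or> d_dense V E d X Y"
    and "d_sparse V E d X' Y' \<or> d_dense V E d X' Y'"
  shows "d_dense V E d X Y \<longleftrightarrow> d_dense V E d X' Y'"
proof -
  have "Y' \<inter> Y - {u} = Y \<inter> Y' - {u}" by blast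
  then show ?thesis
    using assms not_dense_and_sparse_at_common_vertex[OF assms(1-8), of E]
      not_dense_and_sparse_at_common_vertex[OF assms(1,4,5,2,3,7,6), of d E]
    by auto
qed

lemma partition_on_large_intersection:
  assumes "finite V" "partition_on V P" "card P \<le> l"
    and "Y \<subseteq> V" "l * (k + 1) < card Y"
  shows "\<exists>W\<in>P. k < card (Y \<inter> W)"
proof (rule ccontr)
  assume "\<not> ?thesis"
  then have small: "\<And>W. W \<in> P \<Longrightarrow> card (Y \<inter> W) \<le> k" by force
  have "finite P" using assms(1,2) partition_onD1 finite_UnionD by metis
  have "Y = (\<Union>W\<in>P. Y \<inter> W)" using assms(4) partition_onD1[OF assms(2)] by auto
  then have "card Y \<le> (\<Sum>W\<in>P. card (Y \<inter> W))"
    by (metis card_UN_le[OF \<open>finite P\<close>])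
  also have "\<dots> \<le> card P * k" using sum_bounded_above[of P _ k] small by simp
  also have "\<dots> \<le> l * (k + 1)" using assms(3) by (intro mult_le_mono) auto
  finally show False using assms(5) by linarith
qed

lemma strong_bag_size_bound:
  fixes l d :: nat
  assumes "d \<ge> 1"
  shows "l * (2 * d + 2) < 5 * 2 ^ l * d"
proof -
  have "l * (2 * d + 2) \<le> 2 ^ l * (4 * d)"
    using assms less_exp[of l] by (intro mult_le_mono) auto
  also have "\<dots> < 2 ^ l * (5 * d)" using assms by simp
  finally show ?thesis by simp
qed

lemma ld_partition_density_transfer:
  assumes "finite V" "ld_partition V E l d P" "ld_partition V E l' d P'"
    and "X \<in> P" "Y \<in> P" "X' \<in> P'" "Y' \<in> P'" "u \<in> X" "u \<in> X'"
    and "2 * d < card (Y \<inter> Y' - {u})"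
  shows "d_dense V E d X Y \<longleftrightarrow> d_dense V E d X' Y'"
proof (rule d_dense_transfer)
  show "X \<subseteq> V" "Y \<subseteq> V" "X' \<subseteq> V" "Y' \<subseteq> V"
    using assms(2-7) partition_onD1 unfolding ld_partition_def by blast+
  show "d_sparse V E d X Y \<or> d_dense V E d X Y" "d_sparse V E d X' Y' \<or> d_dense V E d X' Y'"
    using assms(2-7) unfolding ld_partition_def by blast+
qed (use assms in auto)

lemma card_Diff_singleton_gt:
  assumes "Suc k < card A"
  shows "k < card (A - {x})"
proof -
  have "finite A" using assms card.infinite by fastforce
  then show ?thesis using assms by (auto simp: card_Diff_singleton_if)
qed

lemma strong_ld_partition_large_intersection:
  assumes "finite V" "strong_ld_partition V E l d P" "strong_ld_partition V E l d P'"
    and "d \<ge> 1" "Y \<in> P"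
  obtains W where "W \<in> P'" "2 * d + 1 < card (Y \<inter> W)"
proof -
  have "Y \<subseteq> V" "5 * 2 ^ l * d \<le> card Y"
    using assms(2,5) partition_onD1
    unfolding strong_ld_partition_def ld_partition_def by blast+
  then have "l * (2 * d + 1 + 1) < card Y"
    using strong_bag_size_bound[OF assms(4), of l] by simp
  moreover have "partition_on V P'" "card P' \<le> l"
    using assms(3) unfolding strong_ld_partition_def ld_partition_def by auto
  ultimately show ?thesis
    using partition_on_large_intersection[OF assms(1)] \<open>Y \<subseteq> V\<close> that by blast
qed

lemma strong_ld_partition_bag_density_eq:
  assumes "finite V" "strong_ld_partition V E l d P" "strong_ld_partition V E l d P'"
    and "X \<in> P" "Y \<in> P" "X' \<in> P'" "Y' \<in> P'"
    and "u \<in> X" "u \<in> X'" "v \<in> Y" "v \<in> Y'" "u \<noteq> v"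
  shows "d_dense V E d X Y \<longleftrightarrow> d_dense V E d X' Y'"
proof -
  have ld: "ld_partition V E l d P" "ld_partition V E l d P'"
    using assms(2,3) unfolding strong_ld_partition_def by blast+
  note transfer = ld_partition_density_transfer[OF assms(1) ld]
  show ?thesis
  proof (cases "d = 0")
    case True
    have "Y \<subseteq> V"
      using ld(1) assms(5) partition_onD1 unfolding ld_partition_def by blast
    then have "finite Y" using assms(1) by (rule finite_subset)
    then have "2 * d < card (Y \<inter> Y' - {u})"
      using True assms(10-12) by (auto simp: card_gt_0_iff)
    then show ?thesis using transfer assms(4-9) by blast
  next
    case False
    then have "d \<ge> 1" by simp
    obtain W where W: "W \<in> P'" "Suc (2 * d) < card (Y \<inter> W)"
      using strong_ld_partition_large_intersection[OF assms(1-3) \<open>d \<ge> 1\<close> assms(5)] by auto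
    obtain Z where Z: "Z \<in> P" "Suc (2 * d) < card (Z \<inter> X')"
      using strong_ld_partition_large_intersection[OF assms(1,3,2) \<open>d \<ge> 1\<close> assms(6)]
      by (auto simp: Int_commute)
    obtain w where w: "w \<in> Y" "w \<in> W"
      using W(2) by (metis Int_iff card.empty ex_in_conv not_less_zero)
    have "d_dense V E d X Y \<longleftrightarrow> d_dense V E d X' W"
      by (rule transfer[OF assms(4,5,6) W(1) assms(8,9) card_Diff_singleton_gt[OF W(2)]])
    moreover have "d_dense V E d Y Z \<longleftrightarrow> d_dense V E d W X'"
      by (rule transfer[OF assms(5) Z(1) W(1) assms(6) w card_Diff_singleton_gt[OF Z(2)]])
    moreover have "d_dense V E d Y Z \<longleftrightarrow> d_dense V E d Y' X'"
      by (rule transfer[OF assms(5) Z(1) assms(7,6,10,11) card_Diff_singleton_gt[OF Z(2)]])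
    ultimately show ?thesis by (simp add: d_dense_commute)
  qed
qed

lemma phi_edges_subset:
  assumes "finite V" "strong_ld_partition V E l d P" "strong_ld_partition V E l d P'"
  shows "phi_edges V E d P \<subseteq> phi_edges V E d P'"
proof
  fix e assume "e \<in> phi_edges V E d P"
  then obtain u v X Y where e: "e = {u, v}" "X \<in> P" "Y \<in> P" "u \<in> X" "v \<in> Y" "u \<noteq> v"
    "{u, v} \<in> E \<longleftrightarrow> \<not> d_dense V E d X Y"
    unfolding phi_edges_def psi_edges_def density_graph_def by blast
  have part: "partition_on V P" "partition_on V P'"
    using assms(2,3) unfolding strong_ld_partition_def ld_partition_def by auto
  have "u \<in> V" "v \<in> V" using e part(1) partition_onD1 by blast+
  then obtain X' Y' where X'Y': "X' \<in> P'" "u \<in> X'" "Y' \<in> P'" "v \<in> Y'"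
    using part(2) partition_onD1 by blast
  have "d_dense V E d X Y \<longleftrightarrow> d_dense V E d X' Y'"
    using strong_ld_partition_bag_density_eq[OF assms] e X'Y' by blast
  then show "e \<in> phi_edges V E d P'"
    unfolding phi_edges_def psi_edges_def density_graph_def using e X'Y' by blast
qed

theorem proposition2p7:
  fixes V :: "'a set" and E :: "'a set set" and l d :: nat and P P' :: "'a set set"
  assumes "strong_ld_graph V E l d"
    and "strong_ld_partition V E l d P"
    and "strong_ld_partition V E l d P'"
  shows "phi_edges V E d P = phi_edges V E d P'"
proof -
  have "finite V" using assms(1) unfolding strong_ld_graph_def simple_graph_def by simp
  then show ?thesis using phi_edges_subset assms(2,3) by blast
qed

end
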